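(* Let $\langle A, \leq, \otimes, \ominus, \mathbf{1}\rangle$ be a residuated partially ordered monoid with bottom element $\bot$, let $k\geq 1$ and $a = a_1\ldots a_k$, $b = b_1\ldots b_k \in Lex_k(A)$. If $\delta(a,b) = \gamma(a,b) = k+1$, then the residuation $a \ominus_k b$ of $a$ by $b$ in $\langle Lex_k(A), \leq_k, \otimes^k, \mathbf{1}^k\rangle$ exists and equals $(a_1 \ominus b_1) \ldots (a_k \ominus b_k)$; that is, this tuple lies in $Lex_k(A)$ and for every $c \in Lex_k(A)$, $b \otimes^k c \leq_k a$ iff $c \leq_k (a_1 \ominus b_1) \ldots (a_k \ominus b_k)$.
   Context: A residuated partially ordered monoid $\langle A, \leq, \otimes, \ominus, \mathbf{1}\rangle$ consists of a partial order $\langle A,\leq\rangle$, a commutative monoid $\langle A,\otimes,\mathbf{1}\rangle$, and a binary operation $\ominus$ with $b \otimes c \leq a$ iff $c \leq a \ominus b$ for all $a,b,c\in A$. $a<b$ means $a\leq b$, $a\neq b$. $I(A) = \{c \in A \mid \forall a,b \in A.\ a \otimes c = b \otimes c \Rightarrow a = b\}$, $C(A)=A\setminus I(A)$. $Lex_k(A)\subseteq A^k$: $Lex_1(A) = A$, $Lex_{k+1}(A) = I(A)\, Lex_k(A) \cup C(A)\{\bot\}^k$ (concatenations of sequences; $\{\bot\}^k$ the singleton of $k$ copies of $\bot$). The order $\leq_k$: $\leq_1=\leq$, and for $k\geq2$, $a_1 \ldots a_k \leq_k b_1 \ldots b_k$ iff $a_1 < b_1$, or $a_1 = b_1$ and $a_2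 \ldots a_k \leq_{k-1} b_2 \ldots b_k$. $\otimes^k$ is componentwise, $\mathbf{1}^k=\mathbf{1}\ldots\mathbf{1}$. For $a,b\in Lex_k(A)$: $\gamma(a,b) = \min\{ i \mid a_i \ominus b_i \in C(A)\}$ and $\delta(a,b) = \min\{ i \mid (a_i \ominus b_i) \otimes b_i < a_i\}$, each equal to $k+1$ if the set is empty. *)

theory Defs
  imports Main
begin

definition rpom :: "('a \<Rightarrow> 'a \<Rightarrow> bool) \<Rightarrow> ('a \<Rightarrow> 'a \<Rightarrow> 'a) \<Rightarrow> ('a \<Rightarrow> 'a \<Rightarrow> 'a) \<Rightarrow> 'a \<Rightarrow> bool" where
  "rpom le mult res one \<longleftrightarrow>
     (\<forall>a. le a a) \<and> (\<forall>a b. le a b \<and> le b a \<longrightarrow> a = b) \<and>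
     (\<forall>a b c. le a b \<and> le b c \<longrightarrow> le a c) \<and>
     (\<forall>a b c. mult (mult a b) c = mult a (mult b c)) \<and>
     (\<forall>a b. mult a b = mult b a) \<and> (\<forall>a. mult a one = a) \<and>
     (\<forall>a b c. le (mult b c) a \<longleftrightarrow> le c (res a b))"

definition is_bot :: "('a \<Rightarrow> 'a \<Rightarrow> bool) \<Rightarrow> 'a \<Rightarrow> bool" where
  "is_bot le bt \<longleftrightarrow> (\<forall>a. le bt a)"

definition Icanc :: "('a \<Rightarrow> 'a \<Rightarrow> 'a) \<Rightarrow> 'a set" where
  "Icanc mult = {c. \<forall>a b. mult a c = mult b c \<longrightarrow> a = b}"

definition Cnon :: "('a \<Rightarrow> 'a \<Rightarrow> 'a) \<Rightarrow> 'a set" where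
  "Cnon mult = UNIV - Icanc mult"

text \<open>Lex_k(A) as a set of lists of length k. Lex 0 = {[]} is an auxiliary base
  case; with it Lex 1 = all singletons, agreeing with Lex_1(A) = A.\<close>
fun Lex :: "('a \<Rightarrow> 'a \<Rightarrow> 'a) \<Rightarrow> 'a \<Rightarrow> nat \<Rightarrow> 'a list set" where
  "Lex mult bt 0 = {[]}"
| "Lex mult bt (Suc k) =
     {c # s | c s. c \<in> Icanc mult \<and> s \<in> Lex mult bt k}
     \<union> {c # replicate k bt | c. c \<in> Cnon mult}"

fun lexle :: "('a \<Rightarrow> 'a \<Rightarrow> bool) \<Rightarrow> 'a list \<Rightarrow> 'a list \<Rightarrow> bool" where
  "lexle le [] [] = True"
| "lexle le (a # as) (b # bs) = ((le a b \<and> a \<noteq> b) \<or> (a = b \<and> lexle le as bs))"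
| "lexle le _ _ = False"

text \<open>gamma and delta, with 1-based indices; value k+1 if no such index.\<close>
definition gamma :: "('a \<Rightarrow> 'a \<Rightarrow> 'a) \<Rightarrow> ('a \<Rightarrow> 'a \<Rightarrow> 'a) \<Rightarrow> 'a list \<Rightarrow> 'a list \<Rightarrow> nat" where
  "gamma mult res a b =
     (if \<exists>i<length a. res (a ! i) (b ! i) \<in> Cnon mult
      then Suc (LEAST i. i < length a \<and> res (a ! i) (b ! i) \<in> Cnon mult)
      else length a + 1)"

definition delta :: "('a \<Rightarrow> 'a \<Rightarrow> bool) \<Rightarrow> ('a \<Rightarrow> 'a \<Rightarrow> 'a) \<Rightarrow> ('a \<Rightarrow> 'a \<Rightarrow> 'a) \<Rightarrow> 'a list \<Rightarrow> 'a list \<Rightarrow> nat" where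
  "delta le mult res a b =
     (let lt = (\<lambda>x y. le x y \<and> x \<noteq> y) in
     (if \<exists>i<length a. lt (mult (res (a ! i) (b ! i)) (b ! i)) (a ! i)
      then Suc (LEAST i. i < length a \<and> lt (mult (res (a ! i) (b ! i)) (b ! i)) (a ! i))
      else length a + 1))"

end

theory Submission
  imports Defs
begin

text \<open>Under \<open>\<delta>(a,b) = k+1\<close> every \<open>r\<^sub>i = a\<^sub>i \<ominus> b\<^sub>i\<close> is an exact quotient,
  \<open>r\<^sub>i \<otimes> b\<^sub>i = a\<^sub>i\<close>, and under \<open>\<gamma>(a,b) = k+1\<close> it is cancellative, so
  \<open>r\<^sub>1 \<dots> r\<^sub>k \<in> Lex\<^sub>k(A)\<close>. The equivalence is proved one coordinate at a time.
  If \<open>c\<^sub>1 = r\<^sub>1\<close>, then \<open>b\<^sub>1 \<otimes> c\<^sub>1 = a\<^sub>1\<close> and both sides reduce to the tails;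
  otherwise residuation decides both sides, except when \<open>b\<^sub>1 \<otimes> c\<^sub>1 = a\<^sub>1\<close> with
  \<open>c\<^sub>1 \<noteq> r\<^sub>1\<close>. Then \<open>b\<^sub>1\<close> is not cancellative, hence neither is
  \<open>a\<^sub>1 = r\<^sub>1 \<otimes> b\<^sub>1\<close>, so the tails of \<open>a\<close> and \<open>b\<close> consist of \<open>\<bottom>\<close>, which absorbs
  everything, and both sides hold.\<close>

fun lex_shaped :: "('a \<Rightarrow> 'a \<Rightarrow> 'a) \<Rightarrow> 'a \<Rightarrow> 'a list \<Rightarrow> bool" where
  "lex_shaped mult bt [] = True"
| "lex_shaped mult bt (x # xs) \<longleftrightarrow>
     (x \<in> Cnon mult \<longrightarrow> set xs \<subseteq> {bt}) \<and> lex_shaped mult bt xs"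

lemma lex_shaped_if_all_bot: "set xs \<subseteq> {bt} \<Longrightarrow> lex_shaped mult bt xs"
  by (induction xs) auto

lemma Cons_in_Lex_Suc_iff:
  "x # xs \<in> Lex mult bt (Suc k) \<longleftrightarrow>
     x \<in> Icanc mult \<and> xs \<in> Lex mult bt k \<or> x \<in> Cnon mult \<and> xs = replicate k bt"
  by auto

lemma in_Lex_iff: "xs \<in> Lex mult bt k \<longleftrightarrow> length xs = k \<and> lex_shaped mult bt xs"
proof (induction k arbitrary: xs)
  case 0
  then show ?case by auto
next
  case (Suc k)
  have replicate_iff: "ys = replicate k bt \<longleftrightarrow> length ys = k \<and> set ys \<subseteq> {bt}" for ys
    by (auto intro: replicate_eqI)
  show ?case
    using Suc.IH lex_shaped_if_all_bot[of _ bt mult]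
    by (cases xs) (simp, auto simp: Cons_in_Lex_Suc_iff replicate_iff Cnon_def simp del: Lex.simps)
qed

lemma lex_shaped_if_cancellative: "set xs \<subseteq> Icanc mult \<Longrightarrow> lex_shaped mult bt xs"
  by (induction xs) (auto simp: Cnon_def)

lemma lexle_refl: "lexle le xs xs"
  by (induction xs) auto

lemma Suc_Least_index_eq_Suc_iff:
  "(if \<exists>i<n. P i then Suc (LEAST i. i < n \<and> P i) else n + 1) = n + 1 \<longleftrightarrow> (\<forall>i<n. \<not> P i)"
proof (cases "\<exists>i<n. P i")
  case True
  then have "(LEAST i. i < n \<and> P i) < n"
    by (metis (mono_tags, lifting) LeastI_ex)
  with True show ?thesis by auto
qed auto

lemma gamma_eq_Suc_length_iff:
  "gamma mult res a b = length a + 1 \<longleftrightarrow> (\<forall>i<length a. res (a ! i) (b ! i) \<in> Icanc mult)"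
  unfolding gamma_def Suc_Least_index_eq_Suc_iff by (simp add: Cnon_def)

lemma delta_eq_Suc_length_iff:
  "delta le mult res a b = length a + 1 \<longleftrightarrow>
     (\<forall>i<length a. \<not> (le (mult (res (a ! i) (b ! i)) (b ! i)) (a ! i) \<and>
                        mult (res (a ! i) (b ! i)) (b ! i) \<noteq> a ! i))"
  unfolding delta_def Let_def Suc_Least_index_eq_Suc_iff ..

locale residuated_pomonoid =
  fixes le :: "'a \<Rightarrow> 'a \<Rightarrow> bool" and mult res :: "'a \<Rightarrow> 'a \<Rightarrow> 'a" and one :: 'a
  assumes rpom: "rpom le mult res one"
begin

lemma refl: "le x x"
  and antisym: "le x y \<Longrightarrow> le y x \<Longrightarrow> x = y"
  and commute: "mult x y = mult y x"
  and assoc: "mult (mult x y) z = mult x (mult y z)"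
  and residuation: "le (mult y z) x \<longleftrightarrow> le z (res x y)"
  using rpom unfolding rpom_def by blast+

lemma mult_res_le: "le (mult (res x y) y) x"
  using residuation[of y "res x y" x] refl commute by metis

lemma mult_bot:
  assumes "is_bot le bt"
  shows "mult x bt = bt"
proof (rule antisym)
  show "le (mult x bt) bt"
    using assms residuation unfolding is_bot_def by blast
  show "le bt (mult x bt)"
    using assms unfolding is_bot_def by blast
qed

lemma map2_mult_replicate_bot:
  assumes "is_bot le bt"
  shows "map2 mult (replicate (length c) bt) c = replicate (length c) bt"
  by (induction c) (simp_all add: commute mult_bot[OF assms])

lemma mult_Cnon:
  assumes "y \<in> Cnon mult"
  shows "mult x y \<in> Cnon mult"
proof -
  obtain u v where "u \<noteq> v" "mult u y = mult v y"
    using assms unfolding Cnon_def Icanc_def by blast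
  moreover have "mult w (mult x y) = mult x (mult w y)" for w
    by (simp only: assoc[symmetric] commute[of w x])
  ultimately have "mult u (mult x y) = mult v (mult x y)"
    by simp
  with \<open>u \<noteq> v\<close> show ?thesis
    unfolding Cnon_def Icanc_def by blast
qed

lemma exact_residuals_if_delta_eq_Suc_length:
  assumes "delta le mult res a b = length a + 1" "length b = length a"
  shows "list_all2 (\<lambda>x y. mult (res x y) y = x) a b"
  using assms(1)[unfolded delta_eq_Suc_length_iff] assms(2)
  by (simp add: list_all2_conv_all_nth mult_res_le)

lemma lexle_map2_mult_iff_lexle_map2_res:
  assumes bot: "is_bot le bt"
    and "list_all2 (\<lambda>x y. mult (res x y) y = x) a b"
    and "length c = length a"
    and "lex_shaped mult bt a" and "lex_shaped mult bt b"
  shows "lexle le (map2 mult b c) a \<longleftrightarrow> lexle le c (map2 res a b)"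
  using assms(2-)
proof (induction a b arbitrary: c rule: list_all2_induct)
  case Nil
  then show ?case by simp
next
  case (Cons a1 a' b1 b')
  obtain c1 c' where c: "c = c1 # c'" "length c' = length a'"
    using Cons.prems(1) by (cases c) auto
  define r1 where "r1 = res a1 b1"
  have exact: "mult r1 b1 = a1"
    using Cons.hyps(1) by (simp add: r1_def)
  have IH: "lexle le (map2 mult b' c') a' \<longleftrightarrow> lexle le c' (map2 res a' b')"
    using Cons c by simp
  consider "c1 = r1" | "c1 \<noteq> r1" "mult b1 c1 \<noteq> a1" | "c1 \<noteq> r1" "mult b1 c1 = a1"
    by blast
  then show ?case
  proof cases
    case 1
    then show ?thesis
      using IH exact c by (simp add: commute r1_def)
  next
    case 2
    then show ?thesis
      using c by (simp add: residuation r1_def)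
  next
    case 3
    then have "b1 \<in> Cnon mult"
      using exact commute[of b1] unfolding Cnon_def Icanc_def by auto
    moreover from this have "a1 \<in> Cnon mult"
      using exact mult_Cnon by metis
    ultimately have "set a' \<subseteq> {bt}" "set b' \<subseteq> {bt}"
      using Cons.prems by auto
    then have "a' = replicate (length c') bt" "b' = replicate (length c') bt"
      using c list_all2_lengthD[OF Cons.hyps(2)] by (auto intro!: replicate_eqI)
    then have "lexle le (map2 mult b' c') a'"
      using map2_mult_replicate_bot[OF bot] lexle_refl by metis
    moreover have "le c1 r1"
      using 3 refl residuation by (metis r1_def)
    ultimately show ?thesis
      using 3 c by (simp add: r1_def)
  qed
qed

end

theorem proposition2:
  fixes le :: "'a \<Rightarrow> 'a \<Rightarrow> bool" and mult res :: "'a \<Rightarrow> 'a \<Rightarrow> 'a"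
    and one bt :: 'a and k :: nat and a b :: "'a list"
  assumes "rpom le mult res one"
    and "is_bot le bt"
    and "k \<ge> 1"
    and "a \<in> Lex mult bt k" and "b \<in> Lex mult bt k"
    and "delta le mult res a b = k + 1"
    and "gamma mult res a b = k + 1"
  shows "map2 res a b \<in> Lex mult bt k \<and>
         (\<forall>c \<in> Lex mult bt k. lexle le (map2 mult b c) a \<longleftrightarrow> lexle le c (map2 res a b))"
proof -
  interpret residuated_pomonoid le mult res one
    using assms(1) by unfold_locales
  have a: "length a = k" "lex_shaped mult bt a" and b: "length b = k" "lex_shaped mult bt b"
    using assms(4,5) by (simp_all add: in_Lex_iff)
  have "\<forall>i<k. res (a ! i) (b ! i) \<in> Icanc mult"
    using gamma_eq_Suc_length_iff[of mult res a b] assms(7) a by simp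
  then have "set (map2 res a b) \<subseteq> Icanc mult"
    using a b by (auto simp: set_conv_nth)
  then have "map2 res a b \<in> Lex mult bt k"
    using a b by (simp add: in_Lex_iff lex_shaped_if_cancellative)
  moreover have "list_all2 (\<lambda>x y. mult (res x y) y = x) a b"
    using exact_residuals_if_delta_eq_Suc_length assms(6) a b by simp
  ultimately show ?thesis
    using lexle_map2_mult_iff_lexle_map2_res[OF assms(2)] a b by (simp add: in_Lex_iff)
qed

end
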